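(* Let $(\sigma,b,g_0,g_1)$ be admissible parameters. If condition (2.e) below holds, then condition (2.d) below holds.
   Context: Let $E$, $U_0$, $U_1$ be separable topological spaces whose topologies are defined by complete metrics, and let $\pi,\mu_0,\mu_1$ be $\sigma$-finite Borel measures on $E,U_0,U_1$. $\mathbb{R}_+=[0,\infty)$. Parameters $(\sigma,b,g_0,g_1)$ are admissible if: $b:\mathbb{R}_+\to\mathbb{R}$ is continuous with $b(0)\ge0$; $\sigma:\mathbb{R}_+\times E\to\mathbb{R}$ is Borel with $\sigma(0,u)=0$; $g_0:\mathbb{R}_+\times U_0\to\mathbb{R}$ is Borel with $g_0(0,u)=0$ and $g_0(x,u)+x\ge0$ for $x>0$; $g_1:\mathbb{R}_+\times U_1\to\mathbb{R}$ is Borel with $g_1(x,u)+x\ge0$ for $x\ge0$. Let $l_0(x,y,u)=g_0(x,u)-g_0(y,u)$. (2.d): for each $m\ge1$ there is a nonnegative nondecreasing function $\rho_m$ on $\mathbb{R}_+$ with $\int_{0+}\rho_m(z)^{-2}dz=\infty$, $\int_E|\sigma(x,u)-\sigma(y,u)|^2\pi(du)\le\rho_m(|x-y|)^2$, and $\int_{U_0}\mu_0(du)\int_0^1\frac{l_0(x,y,u)^2(1-t)1_{\{|l_0(x,y,u)|\le n\}}}{\rho_m(|(x-y)+t\,l_0(x,y,u)|)^2}dt\le c(m,n)$ for every $n\ge1$ and $0\le x,y\le m$, with constants $c(m,n)\ge0$. (2.e): for each $u\in U_0$ the function $x\mapsto g_0(x,u)$ is nondecreasing, and for each $m\ge1$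 there is a nonnegative nondecreasing function $\rho_m$ on $\mathbb{R}_+$ with $\int_{0+}\rho_m(z)^{-2}dz=\infty$ and $\int_E|\sigma(x,u)-\sigma(y,u)|^2\pi(du)+\int_{U_0}|l_0(x,y,u)|\wedge|l_0(x,y,u)|^2\mu_0(du)\le\rho_m(|x-y|)^2$ for all $0\le x,y\le m$. *)

theory Defs
  imports "HOL-Analysis.Analysis"
begin

text \<open>Osgood-type condition: the integral of rho(z)^(-2) near 0+ diverges
  (with the convention 1/0 = infinity, realised in ennreal).\<close>
definition osgood :: "(real \<Rightarrow> real) \<Rightarrow> bool" where
  "osgood \<rho> \<longleftrightarrow> (\<forall>\<epsilon>>0. (\<integral>\<^sup>+ z. indicator {0<..\<epsilon>} z * inverse (ennreal ((\<rho> z)\<^sup>2)) \<partial>lborel) = \<infinity>)"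

definition rate_fun :: "(real \<Rightarrow> real) \<Rightarrow> bool" where
  "rate_fun \<rho> \<longleftrightarrow> (\<forall>z\<ge>0. \<rho> z \<ge> 0) \<and> mono_on {0..} \<rho> \<and> osgood \<rho>"

definition admissible ::
  "('e::polish_space) measure \<Rightarrow> ('u0::polish_space) measure \<Rightarrow> ('u1::polish_space) measure \<Rightarrow>
   (real \<Rightarrow> 'e \<Rightarrow> real) \<Rightarrow> (real \<Rightarrow> real) \<Rightarrow> (real \<Rightarrow> 'u0 \<Rightarrow> real) \<Rightarrow> (real \<Rightarrow> 'u1 \<Rightarrow> real) \<Rightarrow> bool"
where
  "admissible \<pi> \<mu>0 \<mu>1 \<sigma> b g0 g1 \<longleftrightarrow>
     sets \<pi> = sets borel \<and> sigma_finite_measure \<pi> \<and>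
     sets \<mu>0 = sets borel \<and> sigma_finite_measure \<mu>0 \<and>
     sets \<mu>1 = sets borel \<and> sigma_finite_measure \<mu>1 \<and>
     continuous_on {0..} b \<and> b 0 \<ge> 0 \<and>
     (\<lambda>(x,u). \<sigma> x u) \<in> borel_measurable (restrict_space borel ({0..} \<times> UNIV)) \<and>
     (\<forall>u. \<sigma> 0 u = 0) \<and>
     (\<lambda>(x,u). g0 x u) \<in> borel_measurable (restrict_space borel ({0..} \<times> UNIV)) \<and>
     (\<forall>u. g0 0 u = 0) \<and> (\<forall>x>0. \<forall>u. g0 x u + x \<ge> 0) \<and>
     (\<lambda>(x,u). g1 x u) \<in> borel_measurable (restrict_space borel ({0..} \<times> UNIV)) \<and>
     (\<forall>x\<ge>0. \<forall>u. g1 x u + x \<ge> 0)"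

definition l0 :: "(real \<Rightarrow> 'u \<Rightarrow> real) \<Rightarrow> real \<Rightarrow> real \<Rightarrow> 'u \<Rightarrow> real" where
  "l0 g0 x y u = g0 x u - g0 y u"

definition cond_2d ::
  "'e measure \<Rightarrow> 'u0 measure \<Rightarrow> (real \<Rightarrow> 'e \<Rightarrow> real) \<Rightarrow> (real \<Rightarrow> 'u0 \<Rightarrow> real) \<Rightarrow> bool"
where
  "cond_2d \<pi> \<mu>0 \<sigma> g0 \<longleftrightarrow>
    (\<forall>m::nat\<ge>1. \<exists>\<rho>. rate_fun \<rho> \<and>
       (\<forall>x y. 0 \<le> x \<and> x \<le> real m \<and> 0 \<le> y \<and> y \<le> real m \<longrightarrow>
          (\<integral>\<^sup>+ u. ennreal ((\<sigma> x u - \<sigma> y u)\<^sup>2) \<partial>\<pi>) \<le> ennreal ((\<rho> \<bar>x - y\<bar>)\<^sup>2)) \<and>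
       (\<forall>n::nat\<ge>1. \<exists>c\<ge>0. \<forall>x y. 0 \<le> x \<and> x \<le> real m \<and> 0 \<le> y \<and> y \<le> real m \<longrightarrow>
          (\<integral>\<^sup>+ u. (\<integral>\<^sup>+ t. indicator {0..1} t *
              (ennreal ((l0 g0 x y u)\<^sup>2 * (1 - t) * indicator {v. \<bar>v\<bar> \<le> real n} (l0 g0 x y u))
               / ennreal ((\<rho> \<bar>(x - y) + t * l0 g0 x y u\<bar>)\<^sup>2)) \<partial>lborel) \<partial>\<mu>0)
          \<le> ennreal c))"

definition cond_2e ::
  "'e measure \<Rightarrow> 'u0 measure \<Rightarrow> (real \<Rightarrow> 'e \<Rightarrow> real) \<Rightarrow> (real \<Rightarrow> 'u0 \<Rightarrow> real) \<Rightarrow> bool"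
where
  "cond_2e \<pi> \<mu>0 \<sigma> g0 \<longleftrightarrow>
    (\<forall>u. mono_on {0..} (\<lambda>x. g0 x u)) \<and>
    (\<forall>m::nat\<ge>1. \<exists>\<rho>. rate_fun \<rho> \<and>
       (\<forall>x y. 0 \<le> x \<and> x \<le> real m \<and> 0 \<le> y \<and> y \<le> real m \<longrightarrow>
          (\<integral>\<^sup>+ u. ennreal ((\<sigma> x u - \<sigma> y u)\<^sup>2) \<partial>\<pi>)
          + (\<integral>\<^sup>+ u. ennreal (min \<bar>l0 g0 x y u\<bar> ((l0 g0 x y u)\<^sup>2)) \<partial>\<mu>0)
          \<le> ennreal ((\<rho> \<bar>x - y\<bar>)\<^sup>2)))"

end

theory Submission
  imports Defs
begin

text \<open>The same rate function \<open>\<rho>\<close> works for (2.d). As \<open>g0(\<cdot>, u)\<close> is nondecreasing, the jump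
  \<open>l = l0(x, y, u)\<close> has the sign of \<open>x - y\<close>, so \<open>|(x - y) + t l| \<ge> |x - y|\<close> for \<open>t \<in> [0, 1]\<close>, and
  since \<open>\<rho>\<close> is nondecreasing the denominator in (2.d) is at least \<open>\<rho>(|x - y|)\<^sup>2\<close>. The numerator
  satisfies \<open>l\<^sup>2 (1 - t) 1{|l| \<le> n} \<le> n min(|l|, l\<^sup>2)\<close>. Hence the double integral in (2.d) is at most
  \<open>n \<integral> min(|l|, l\<^sup>2) d\<mu>0 / \<rho>(|x - y|)\<^sup>2\<close>, which is \<open>\<le> n\<close> by (2.e).\<close>

lemma truncated_sq_le_min_abs_sq:
  fixes l t c :: real
  assumes "0 \<le> t" "t \<le> 1" "1 \<le> c"
  shows "l\<^sup>2 * (1 - t) * indicator {v. \<bar>v\<bar> \<le> c} l \<le> c * min \<bar>l\<bar> (l\<^sup>2)"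
proof (cases "\<bar>l\<bar> \<le> c")
  case True
  have sq: "l\<^sup>2 = \<bar>l\<bar> * \<bar>l\<bar>"
    by (simp add: power2_eq_square abs_mult_self_eq)
  have "l\<^sup>2 * (1 - t) \<le> l\<^sup>2"
    using assms by (simp add: mult_left_le)
  moreover have "l\<^sup>2 \<le> c * min \<bar>l\<bar> (l\<^sup>2)"
  proof (cases "\<bar>l\<bar> \<le> 1")
    case True
    then have "min \<bar>l\<bar> (l\<^sup>2) = l\<^sup>2"
      using mult_left_le[of "\<bar>l\<bar>" "\<bar>l\<bar>"] sq by simp
    then show ?thesis
      using \<open>1 \<le> c\<close> by (simp add: mult_le_cancel_right1)
  next
    case False
    then have "min \<bar>l\<bar> (l\<^sup>2) = \<bar>l\<bar>"
      using mult_right_mono[of 1 "\<bar>l\<bar>" "\<bar>l\<bar>"] sq by simp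
    then show ?thesis
      using \<open>\<bar>l\<bar> \<le> c\<close> mult_right_mono[of "\<bar>l\<bar>" c "\<bar>l\<bar>"] sq by simp
  qed
  ultimately show ?thesis
    using True by simp
qed (use assms in simp)

lemma abs_le_abs_add_same_sign:
  fixes d l t :: real
  assumes "0 \<le> t" "0 \<le> d * l"
  shows "\<bar>d\<bar> \<le> \<bar>d + t * l\<bar>"
  using assms by (smt (verit) mult_nonneg_nonpos zero_le_mult_iff)

lemma ennreal_inverse_antimono:
  fixes a b :: ennreal
  assumes "a \<le> b"
  shows "inverse b \<le> inverse a"
proof (cases "a = 0")
  case False
  show ?thesis
  proof (cases b rule: ennreal_cases)
    case (real s)
    with assms False obtain r where "a = ennreal r" "0 < r" "r \<le> s"
      by (cases a rule: ennreal_cases) (auto simp: top_unique)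
    with real show ?thesis
      by (simp add: inverse_ennreal le_imp_inverse_le)
  qed simp
qed simp

lemma ennreal_divide_le_one: "(a::ennreal) \<le> b \<Longrightarrow> a / b \<le> 1"
  using divide_le_posI_ennreal[of b a 1] by (cases "b = 0") (auto simp: zero_less_iff_neq_zero)

lemma rate_fun_sq_mono:
  assumes "rate_fun \<rho>" "0 \<le> a" "a \<le> b"
  shows "(\<rho> a)\<^sup>2 \<le> (\<rho> b)\<^sup>2"
proof (rule power_mono)
  from assms show "0 \<le> \<rho> a"
    by (simp add: rate_fun_def)
  from assms(1) have "mono_on {0..} \<rho>"
    by (simp add: rate_fun_def)
  then show "\<rho> a \<le> \<rho> b"
    by (rule mono_onD) (use assms in auto)
qed

lemma measurable_section_restrict_space:
  fixes f :: "'a::second_countable_topology \<times> 'b::second_countable_topology \<Rightarrow> 'c::topological_space"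
  assumes f: "f \<in> borel_measurable (restrict_space borel (A \<times> UNIV))"
    and "x \<in> A" and M: "sets M = sets borel"
  shows "(\<lambda>u. f (x, u)) \<in> borel_measurable M"
proof -
  have "Pair x \<in> measurable (borel :: 'b measure) (borel \<Otimes>\<^sub>M borel)"
    by (rule measurable_Pair1') simp
  then have "Pair x \<in> measurable (borel :: 'b measure) borel"
    by (simp only: borel_prod)
  then have "Pair x \<in> measurable (borel :: 'b measure) (restrict_space borel (A \<times> UNIV))"
    using \<open>x \<in> A\<close> by (simp add: measurable_restrict_space2_iff)
  from measurable_comp[OF this f] show ?thesis
    by (simp add: o_def measurable_cong_sets[OF M refl])
qed

lemma l0_same_sign:
  assumes "mono_on {0..} (\<lambda>x. g0 x u)" "0 \<le> x" "0 \<le> y"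
  shows "0 \<le> (x - y) * l0 g0 x y u"
proof (cases "y \<le> x")
  case True
  then have "g0 y u \<le> g0 x u"
    using assms by (auto intro: mono_onD)
  with True show ?thesis
    by (simp add: l0_def)
next
  case False
  then have "g0 x u \<le> g0 y u"
    using assms by (auto intro: mono_onD)
  with False show ?thesis
    by (simp add: l0_def mult_nonpos_nonpos)
qed

lemma jump_remainder_integrand_le:
  fixes n :: nat
  assumes "rate_fun \<rho>" "1 \<le> n" "0 \<le> t" "t \<le> 1" "0 \<le> d * l"
  shows "ennreal (l\<^sup>2 * (1 - t) * indicator {v. \<bar>v\<bar> \<le> real n} l) / ennreal ((\<rho> \<bar>d + t * l\<bar>)\<^sup>2)
     \<le> ennreal (real n) * ennreal (min \<bar>l\<bar> (l\<^sup>2)) / ennreal ((\<rho> \<bar>d\<bar>)\<^sup>2)"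
proof -
  have "ennreal (l\<^sup>2 * (1 - t) * indicator {v. \<bar>v\<bar> \<le> real n} l)
      \<le> ennreal (real n) * ennreal (min \<bar>l\<bar> (l\<^sup>2))"
    using assms by (subst ennreal_mult'[symmetric]) (auto intro!: ennreal_leI truncated_sq_le_min_abs_sq)
  moreover have "(\<rho> \<bar>d\<bar>)\<^sup>2 \<le> (\<rho> \<bar>d + t * l\<bar>)\<^sup>2"
    using assms by (intro rate_fun_sq_mono abs_le_abs_add_same_sign) auto
  then have "inverse (ennreal ((\<rho> \<bar>d + t * l\<bar>)\<^sup>2)) \<le> inverse (ennreal ((\<rho> \<bar>d\<bar>)\<^sup>2))"
    by (intro ennreal_inverse_antimono ennreal_leI)
  ultimately show ?thesis
    unfolding divide_ennreal_def by (rule mult_mono) simp_all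
qed

definition sigma_increment :: "'e measure \<Rightarrow> (real \<Rightarrow> 'e \<Rightarrow> real) \<Rightarrow> real \<Rightarrow> real \<Rightarrow> ennreal" where
  "sigma_increment \<pi> \<sigma> x y = (\<integral>\<^sup>+ u. ennreal ((\<sigma> x u - \<sigma> y u)\<^sup>2) \<partial>\<pi>)"

definition jump_increment :: "'u measure \<Rightarrow> (real \<Rightarrow> 'u \<Rightarrow> real) \<Rightarrow> real \<Rightarrow> real \<Rightarrow> ennreal" where
  "jump_increment \<mu>0 g0 x y = (\<integral>\<^sup>+ u. ennreal (min \<bar>l0 g0 x y u\<bar> ((l0 g0 x y u)\<^sup>2)) \<partial>\<mu>0)"

definition jump_remainder ::
  "'u measure \<Rightarrow> (real \<Rightarrow> 'u \<Rightarrow> real) \<Rightarrow> (real \<Rightarrow> real) \<Rightarrow> nat \<Rightarrow> real \<Rightarrow> real \<Rightarrow> ennreal"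
where
  "jump_remainder \<mu>0 g0 \<rho> n x y =
    (\<integral>\<^sup>+ u. (\<integral>\<^sup>+ t. indicator {0..1} t *
        (ennreal ((l0 g0 x y u)\<^sup>2 * (1 - t) * indicator {v. \<bar>v\<bar> \<le> real n} (l0 g0 x y u))
         / ennreal ((\<rho> \<bar>(x - y) + t * l0 g0 x y u\<bar>)\<^sup>2)) \<partial>lborel) \<partial>\<mu>0)"

lemma jump_remainder_le:
  fixes n :: nat and g0 :: "real \<Rightarrow> 'u::polish_space \<Rightarrow> real"
  assumes \<rho>: "rate_fun \<rho>" and n: "1 \<le> n"
    and mono: "\<And>u. mono_on {0..} (\<lambda>x. g0 x u)"
    and meas: "(\<lambda>(x,u). g0 x u) \<in> borel_measurable (restrict_space borel ({0..} \<times> UNIV))"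
    and sets: "sets \<mu>0 = sets borel" and "0 \<le> x" "0 \<le> y"
  shows "jump_remainder \<mu>0 g0 \<rho> n x y
    \<le> ennreal (real n) * jump_increment \<mu>0 g0 x y / ennreal ((\<rho> \<bar>x - y\<bar>)\<^sup>2)"
proof -
  define F where "F = (\<lambda>u t. indicator {0..1} t *
    (ennreal ((l0 g0 x y u)\<^sup>2 * (1 - t) * indicator {v. \<bar>v\<bar> \<le> real n} (l0 g0 x y u))
     / ennreal ((\<rho> \<bar>(x - y) + t * l0 g0 x y u\<bar>)\<^sup>2)))"
  define M where "M = (\<lambda>u. ennreal (min \<bar>l0 g0 x y u\<bar> ((l0 g0 x y u)\<^sup>2)))"
  define R where "R = ennreal ((\<rho> \<bar>x - y\<bar>)\<^sup>2)"
  have "(\<lambda>u. g0 z u) \<in> borel_measurable \<mu>0" if "0 \<le> z" for z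
    using measurable_section_restrict_space[OF meas _ sets, of z] that by simp
  then have M_meas: "M \<in> borel_measurable \<mu>0"
    unfolding M_def l0_def using \<open>0 \<le> x\<close> \<open>0 \<le> y\<close> by measurable
  have inner: "(\<integral>\<^sup>+ t. F u t \<partial>lborel) \<le> ennreal (real n) * M u / R" for u
  proof -
    have "F u t \<le> (ennreal (real n) * M u / R) * indicator {0..1} t" for t
    proof (cases "t \<in> {0..1}")
      case True
      then have t: "0 \<le> t" "t \<le> 1"
        by auto
      have sign: "0 \<le> (x - y) * l0 g0 x y u"
        by (rule l0_same_sign[where u = u, OF mono \<open>0 \<le> x\<close> \<open>0 \<le> y\<close>])
      from jump_remainder_integrand_le[OF \<rho> n t sign] True
      show ?thesis
        by (simp only: F_def M_def R_def indicator_simps(1) mult_1 mult_1_right)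
    qed (simp add: F_def)
    then have "(\<integral>\<^sup>+ t. F u t \<partial>lborel)
        \<le> (\<integral>\<^sup>+ t. (ennreal (real n) * M u / R) * indicator {0..1::real} t \<partial>lborel)"
      by (intro nn_integral_mono)
    then show ?thesis
      by (simp add: nn_integral_cmult_indicator)
  qed
  have "jump_remainder \<mu>0 g0 \<rho> n x y = (\<integral>\<^sup>+ u. (\<integral>\<^sup>+ t. F u t \<partial>lborel) \<partial>\<mu>0)"
    by (simp only: jump_remainder_def F_def)
  also have "\<dots> \<le> (\<integral>\<^sup>+ u. ennreal (real n) * M u / R \<partial>\<mu>0)"
    by (intro nn_integral_mono inner)
  also have "\<dots> = (\<integral>\<^sup>+ u. ennreal (real n) * M u \<partial>\<mu>0) / R"
    by (intro nn_integral_divide borel_measurable_times_ennreal borel_measurable_const M_meas)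
  also have "\<dots> = ennreal (real n) * jump_increment \<mu>0 g0 x y / R"
    using nn_integral_cmult[OF M_meas, of "ennreal (real n)"] by (simp only: M_def jump_increment_def)
  finally show ?thesis
    unfolding R_def .
qed

definition cond_2e_level ::
  "'e measure \<Rightarrow> 'u0 measure \<Rightarrow> (real \<Rightarrow> 'e \<Rightarrow> real) \<Rightarrow> (real \<Rightarrow> 'u0 \<Rightarrow> real) \<Rightarrow> nat \<Rightarrow> (real \<Rightarrow> real) \<Rightarrow> bool"
where
  "cond_2e_level \<pi> \<mu>0 \<sigma> g0 m \<rho> \<longleftrightarrow>
    (\<forall>x y. 0 \<le> x \<and> x \<le> real m \<and> 0 \<le> y \<and> y \<le> real m \<longrightarrow>
       sigma_increment \<pi> \<sigma> x y + jump_increment \<mu>0 g0 x y \<le> ennreal ((\<rho> \<bar>x - y\<bar>)\<^sup>2))"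

definition cond_2d_level ::
  "'e measure \<Rightarrow> 'u0 measure \<Rightarrow> (real \<Rightarrow> 'e \<Rightarrow> real) \<Rightarrow> (real \<Rightarrow> 'u0 \<Rightarrow> real) \<Rightarrow> nat \<Rightarrow> (real \<Rightarrow> real) \<Rightarrow> bool"
where
  "cond_2d_level \<pi> \<mu>0 \<sigma> g0 m \<rho> \<longleftrightarrow>
    (\<forall>x y. 0 \<le> x \<and> x \<le> real m \<and> 0 \<le> y \<and> y \<le> real m \<longrightarrow>
       sigma_increment \<pi> \<sigma> x y \<le> ennreal ((\<rho> \<bar>x - y\<bar>)\<^sup>2)) \<and>
    (\<forall>n::nat\<ge>1. \<exists>c\<ge>0. \<forall>x y. 0 \<le> x \<and> x \<le> real m \<and> 0 \<le> y \<and> y \<le> real m \<longrightarrow>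
       jump_remainder \<mu>0 g0 \<rho> n x y \<le> ennreal c)"

lemma cond_2e_iff_level:
  "cond_2e \<pi> \<mu>0 \<sigma> g0 \<longleftrightarrow>
    (\<forall>u. mono_on {0..} (\<lambda>x. g0 x u)) \<and> (\<forall>m::nat\<ge>1. \<exists>\<rho>. rate_fun \<rho> \<and> cond_2e_level \<pi> \<mu>0 \<sigma> g0 m \<rho>)"
  unfolding cond_2e_def cond_2e_level_def sigma_increment_def jump_increment_def ..

lemma cond_2d_iff_level:
  "cond_2d \<pi> \<mu>0 \<sigma> g0 \<longleftrightarrow> (\<forall>m::nat\<ge>1. \<exists>\<rho>. rate_fun \<rho> \<and> cond_2d_level \<pi> \<mu>0 \<sigma> g0 m \<rho>)"
  unfolding cond_2d_def cond_2d_level_def sigma_increment_def jump_remainder_def ..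

lemma cond_2d_level_if_cond_2e_level:
  fixes g0 :: "real \<Rightarrow> 'u::polish_space \<Rightarrow> real"
  assumes \<rho>: "rate_fun \<rho>" and mono: "\<And>u. mono_on {0..} (\<lambda>x. g0 x u)"
    and meas: "(\<lambda>(x,u). g0 x u) \<in> borel_measurable (restrict_space borel ({0..} \<times> UNIV))"
    and sets: "sets \<mu>0 = sets borel"
    and bound: "cond_2e_level \<pi> \<mu>0 \<sigma> g0 m \<rho>"
  shows "cond_2d_level \<pi> \<mu>0 \<sigma> g0 m \<rho>"
  unfolding cond_2d_level_def
proof (intro conjI allI impI)
  fix x y assume xy: "0 \<le> x \<and> x \<le> real m \<and> 0 \<le> y \<and> y \<le> real m"
  show "sigma_increment \<pi> \<sigma> x y \<le> ennreal ((\<rho> \<bar>x - y\<bar>)\<^sup>2)"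
    using bound[unfolded cond_2e_level_def, rule_format, OF xy]
    by (rule order_trans[OF add_increasing2[OF zero_le order_refl]])
next
  fix n :: nat assume n: "1 \<le> n"
  show "\<exists>c\<ge>0. \<forall>x y. 0 \<le> x \<and> x \<le> real m \<and> 0 \<le> y \<and> y \<le> real m \<longrightarrow>
      jump_remainder \<mu>0 g0 \<rho> n x y \<le> ennreal c"
  proof (intro exI[of _ "real n"] conjI allI impI)
    fix x y assume xy: "0 \<le> x \<and> x \<le> real m \<and> 0 \<le> y \<and> y \<le> real m"
    have "jump_increment \<mu>0 g0 x y \<le> ennreal ((\<rho> \<bar>x - y\<bar>)\<^sup>2)"
      using bound[unfolded cond_2e_level_def, rule_format, OF xy]
      by (rule order_trans[OF add_increasing[OF zero_le order_refl]])
    then have "ennreal (real n) * (jump_increment \<mu>0 g0 x y / ennreal ((\<rho> \<bar>x - y\<bar>)\<^sup>2))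
        \<le> ennreal (real n) * 1"
      by (intro mult_left_mono ennreal_divide_le_one) auto
    with jump_remainder_le[OF \<rho> n mono meas sets, of x y] xy
    show "jump_remainder \<mu>0 g0 \<rho> n x y \<le> ennreal (real n)"
      by (simp add: ennreal_times_divide)
  qed simp
qed

theorem proposition2p4:
  fixes \<pi> :: "'e::polish_space measure" and \<mu>0 :: "'u0::polish_space measure"
    and \<mu>1 :: "'u1::polish_space measure"
    and \<sigma> :: "real \<Rightarrow> 'e \<Rightarrow> real" and b :: "real \<Rightarrow> real"
    and g0 :: "real \<Rightarrow> 'u0 \<Rightarrow> real" and g1 :: "real \<Rightarrow> 'u1 \<Rightarrow> real"
  assumes "admissible \<pi> \<mu>0 \<mu>1 \<sigma> b g0 g1"
    and "cond_2e \<pi> \<mu>0 \<sigma> g0"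
  shows "cond_2d \<pi> \<mu>0 \<sigma> g0"
proof -
  have meas: "(\<lambda>(x,u). g0 x u) \<in> borel_measurable (restrict_space borel ({0..} \<times> UNIV))"
    and sets: "sets \<mu>0 = sets borel"
    using assms(1) by (auto simp: admissible_def)
  from assms(2) have mono: "\<And>u. mono_on {0..} (\<lambda>x. g0 x u)"
    and bound: "\<And>m::nat. 1 \<le> m \<Longrightarrow> \<exists>\<rho>. rate_fun \<rho> \<and> cond_2e_level \<pi> \<mu>0 \<sigma> g0 m \<rho>"
    unfolding cond_2e_iff_level by auto
  show ?thesis
    unfolding cond_2d_iff_level
    using bound cond_2d_level_if_cond_2e_level[OF _ mono meas sets] by blast
qed

end
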